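(* Under the assumptions of the context, the $r\times r$ block $T=(Q_0)_{1,1}$ is a Jacobian matrix: there exist new local coordinates $\hat t_1,\dots,\hat t_r$ on $\mathbb C^r$ such that $T_{ij}=\partial_j\hat t_i$ for $1\le i,j\le r$, where $\partial_j=\partial/\partial t_j$.
   Context: Let $q_i=e^{t_i}$, $\partial_i=q_i\partial/\partial q_i$, $K$ a ring of functions of $q$, $h$ a complex parameter. $\mathcal A=K[b_1,\dots,b_r]/(\mathcal R_1,\dots,\mathcal R_u)$ with relations homogeneous for degrees $|b_i|=2$ and integers $|q_j|\ge0$, free over $K$ of rank $s+1$, deforming $\mathcal A_0=\mathbb C[b]/(\mathcal R_i|_{q=0})$ with $\dim\mathcal A_0=s+1$. $D^h$ is the ring of differential operators generated by $h\partial_1,\dots,h\partial_r$ over $K[h]$; $M^h=D^h/(D^h_1,\dots,D^h_u)$ is a quantization of $\mathcal A$ (free over $K[h]$ of rank $s+1$, $\lim_{h\to0}S(D^h_i)=\mathcal R_i$, $S$ replacing $h\partial_j$ by $b_j$), each $D^h_i$ homogeneous with $\deg h=2$, $\deg q_j=|q_j|$, $\deg\partial_j=0$. The $K[h]$-basis $[P_0],\dots,[P_s]$ consists of standard monomials in $h\partial_j$ for a Gröbner basis of the ideal (graded reverse lexicographic order), with $P_0=1$, $P_i=h\partial_i$ ($1\le i\le r$), and $c_j=\lim_{h\to0}S(P_j)$ a $K$-basis of $\mathcal A$. $\Omega^h_i$ is defined by $[\partial_iP_j]=\sum_k(\Omega^h_i)_{kj}[P_k]$, $\omega_i$ by $[b_ic_j]=\sum_k(\omega_i)_{kj}[c_k]$,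 $\Omega^h=\sum\Omega^h_idt_i$ (flat), $\omega=\sum\omega_idt_i$. Assume $\Omega^h=\frac1h\omega+\theta$, and that the zero-th order term of any second order element of the Gröbner basis is independent of $h$. Let $Q_0$ solve $Q_0^{-1}dQ_0=\theta$ on a connected domain with $Q_0=I$ at some point; then $Q_0$ is block upper triangular in its first two block rows, with $(0,0)$ block $1$ and $(1,1)$ block $T$, where blocks refer to the decomposition of $M^h$ by degree in $h\partial$ (degree $0$ spanned by $[1]$, degree $1$ by $[h\partial_1],\dots,[h\partial_r]$). *)

theory Defs
  imports "HOL-Analysis.Analysis"
begin

text \<open>Coordinates t = (t_1,...,t_r) range over complex^'i, with r = CARD('i).
  Multi-indices (exponents of monomials in h d_1,...,h d_r) are functions 'i => nat.
  The K[h]-basis [P_alpha] of M^h is indexed by the finite set S of exponents of the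
  standard monomials P_alpha = (h d)^alpha.  Matrices acting on M^h are functions
  mi => mi => complex (only entries indexed by S matter).\<close>

type_synonym 'i mi = "'i \<Rightarrow> nat"

definition mi0 :: "'i mi" where "mi0 = (\<lambda>_. 0)"

definition unitv :: "'i \<Rightarrow> 'i mi" where "unitv i = (\<lambda>k. if k = i then 1 else 0)"

definition incr :: "'i mi \<Rightarrow> 'i \<Rightarrow> 'i mi" where
  "incr \<alpha> i = (\<lambda>k. \<alpha> k + (if k = i then 1 else 0))"

definition order_ideal :: "'i mi set \<Rightarrow> bool" where
  "order_ideal S \<longleftrightarrow> (\<forall>\<alpha> \<beta>. \<alpha> \<in> S \<longrightarrow> (\<forall>k. \<beta> k \<le> \<alpha> k) \<longrightarrow> \<beta> \<in> S)"

definition cholo_on :: "(complex^'i::finite) set \<Rightarrow> (complex^'i \<Rightarrow> complex) \<Rightarrow> bool" where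
  "cholo_on U f \<longleftrightarrow> (\<forall>t\<in>U. \<exists>c::complex^'i.
      (f has_derivative (\<lambda>v. \<Sum>j\<in>UNIV. c $ j * v $ j)) (at t))"

text \<open>Complex partial derivative d/dt_j (for q_j = e^{t_j} this is q_j d/dq_j).\<close>
definition has_cpartial :: "(complex^'i::finite \<Rightarrow> complex) \<Rightarrow> 'i \<Rightarrow> complex^'i \<Rightarrow> complex \<Rightarrow> bool" where
  "has_cpartial f j t D \<longleftrightarrow> ((\<lambda>z. f (t + (\<chi> k. if k = j then z else 0))) has_field_derivative D) (at 0)"

definition cpd :: "(complex^'i::finite \<Rightarrow> complex) \<Rightarrow> 'i \<Rightarrow> complex^'i \<Rightarrow> complex" where
  "cpd f j t = deriv (\<lambda>z. f (t + (\<chi> k. if k = j then z else 0))) 0"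

definition mmul :: "'i mi set \<Rightarrow> ('i mi \<Rightarrow> 'i mi \<Rightarrow> complex) \<Rightarrow> ('i mi \<Rightarrow> 'i mi \<Rightarrow> complex)
   \<Rightarrow> 'i mi \<Rightarrow> 'i mi \<Rightarrow> complex" where
  "mmul S A B k l = (\<Sum>m\<in>S. A k m * B m l)"

definition Omega :: "('i \<Rightarrow> complex^'i \<Rightarrow> 'i mi \<Rightarrow> 'i mi \<Rightarrow> complex)
   \<Rightarrow> ('i \<Rightarrow> complex^'i \<Rightarrow> 'i mi \<Rightarrow> 'i mi \<Rightarrow> complex)
   \<Rightarrow> complex \<Rightarrow> 'i \<Rightarrow> complex^'i \<Rightarrow> 'i mi \<Rightarrow> 'i mi \<Rightarrow> complex" where
  "Omega \<omega> \<theta> h i t k l = \<omega> i t k l / h + \<theta> i t k l"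

end

theory Submission
  imports Defs
begin

text \<open>Flatness of \<open>\<Omega>\<^sup>h = \<omega>/h + \<theta>\<close>, read off on the column of \<open>[1]\<close>, makes
  \<open>(\<theta>\<^sub>a)\<^sub>m\<^sub>,\<^sub>e\<^sub>b\<close> symmetric in \<open>a, b\<close>. Since \<open>\<partial>\<^sub>l Q\<^sub>0 = Q\<^sub>0 \<theta>\<^sub>l\<close>, the derivative
  \<open>\<partial>\<^sub>l T\<^sub>i\<^sub>j = (Q\<^sub>0 \<theta>\<^sub>l)\<^sub>e\<^sub>i\<^sub>,\<^sub>e\<^sub>j\<close> is then symmetric in \<open>j, l\<close>: every row of \<open>T\<close> is a closed
  holomorphic 1-form. By the Poincare lemma it is exact on a ball, and its potentials are the
  new coordinates.\<close>

lemma bounded_linear_coordinate_axis: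
  "bounded_linear (\<lambda>z::complex. (\<chi> k. if k = j then z else 0) :: complex^'i::finite)"
  by (rule linear_conv_bounded_linear[THEN iffD1]) (auto simp: linear_iff vec_eq_iff)

lemma has_cpartial_if_has_derivative:
  fixes f :: "complex^'i::finite \<Rightarrow> complex"
  assumes "(f has_derivative (\<lambda>v. \<Sum>l\<in>UNIV. c l * v$l)) (at t)"
  shows "has_cpartial f j t (c j)"
proof -
  let ?e = "\<lambda>z. (\<chi> k. if k = j then z else 0) :: complex^'i"
  have "((\<lambda>z. t + ?e z) has_derivative ?e) (at 0)"
    by (auto intro!: derivative_eq_intros bounded_linear_imp_has_derivative
        bounded_linear_coordinate_axis)
  moreover have "t + ?e 0 = t"
    by (simp add: vec_eq_iff)
  ultimately have "(f \<circ> (\<lambda>z. t + ?e z) has_derivative (\<lambda>v. \<Sum>l\<in>UNIV. c l * v$l) \<circ> ?e) (at 0)"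
    using assms by (intro diff_chain_at) simp_all
  moreover have "(\<lambda>v. \<Sum>l\<in>UNIV. c l * v$l) \<circ> ?e = (*) (c j)"
    by (auto simp: fun_eq_iff if_distrib cong: if_cong)
  ultimately show ?thesis
    by (simp add: has_cpartial_def has_field_derivative_def comp_def)
qed

lemma cholo_on_has_derivative_partials:
  fixes f :: "complex^'i::finite \<Rightarrow> complex"
  assumes "cholo_on U f" "t \<in> U" "\<And>j. has_cpartial f j t (d j)"
  shows "(f has_derivative (\<lambda>v. \<Sum>j\<in>UNIV. d j * v$j)) (at t)"
proof -
  obtain c :: "complex^'i" where c: "(f has_derivative (\<lambda>v. \<Sum>j\<in>UNIV. c$j * v$j)) (at t)"
    using assms(1,2) unfolding cholo_on_def by blast
  have "c$j = d j" for j
    using has_cpartial_if_has_derivative[of f "\<lambda>l. c$l", OF c, of j] assms(3)[of j] DERIV_unique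
    unfolding has_cpartial_def by blast
  with c show ?thesis
    by simp
qed

lemma cholo_on_imp_continuous_on: "cholo_on U f \<Longrightarrow> continuous_on U f"
  unfolding cholo_on_def by (meson continuous_at_imp_continuous_on has_derivative_continuous)

lemma cpd_locally_const:
  fixes g :: "complex^'i::finite \<Rightarrow> complex"
  assumes "open U" "t \<in> U" "\<And>s. s \<in> U \<Longrightarrow> g s = c"
  shows "cpd g j t = 0"
proof -
  let ?L = "\<lambda>z. t + (\<chi> k. if k = j then z else 0) :: complex^'i"
  have "continuous_on UNIV ?L"
    by (intro continuous_intros linear_continuous_on bounded_linear.linear
        bounded_linear_coordinate_axis)
  moreover have "?L 0 = t"
    by (simp add: vec_eq_iff)
  ultimately have "open (?L -` U)" "0 \<in> ?L -` U"
    using assms(1,2) by (simp_all add: open_vimage)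
  then have "eventually (\<lambda>z. g (?L z) = c) (nhds 0)"
    using assms(3) eventually_nhds_in_open[of "?L -` U" 0] by (auto elim!: eventually_mono)
  then have "((\<lambda>z. g (?L z)) has_field_derivative 0) (at 0)"
    using DERIV_cong_ev[of 0 0 "\<lambda>z. g (?L z)" "\<lambda>z. c" 0 0] by simp
  then show ?thesis
    unfolding cpd_def by (rule DERIV_imp_deriv)
qed

lemma affine_in_inverse_const_eq:
  fixes a b c d :: "'a::field_char_0"
  assumes "\<And>h. h \<noteq> 0 \<Longrightarrow> a / h + b = c / h + d"
  shows "b = d"
proof -
  have "a + b = c + d" "a / 2 + b = c / 2 + d"
    using assms[of 1] assms[of 2] by simp_all
  then show ?thesis
    by (simp add: field_simps) algebra
qed

lemma incr_mi0: "incr mi0 i = unitv i"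
  by (simp add: incr_def mi0_def unitv_def fun_eq_iff)

text \<open>On the column of \<open>[1]\<close> each \<open>\<Omega>\<^sup>h\<^sub>b\<close> is the constant unit column \<open>e\<^sub>b / h\<close>,
  so there flatness reduces to \<open>(\<Omega>\<^sup>h\<^sub>a)\<^sub>m\<^sub>,\<^sub>e\<^sub>b = (\<Omega>\<^sup>h\<^sub>b)\<^sub>m\<^sub>,\<^sub>e\<^sub>a\<close>; its \<open>h\<^sup>0\<close>-part is the claim.\<close>
lemma theta_unitv_sym:
  fixes \<omega> \<theta> :: "'i::finite \<Rightarrow> complex^'i \<Rightarrow> 'i mi \<Rightarrow> 'i mi \<Rightarrow> complex"
  assumes "open U" "t \<in> U" "m \<in> S"
    and S: "finite S" "mi0 \<in> S" "\<And>i. unitv i \<in> S"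
    and std: "\<And>i \<alpha> t k. t \<in> U \<Longrightarrow> \<alpha> \<in> S \<Longrightarrow> incr \<alpha> i \<in> S \<Longrightarrow> k \<in> S \<Longrightarrow>
                 \<omega> i t k \<alpha> = (if k = incr \<alpha> i then 1 else 0) \<and> \<theta> i t k \<alpha> = 0"
    and flat: "\<And>h i j t k l. h \<noteq> 0 \<Longrightarrow> t \<in> U \<Longrightarrow> k \<in> S \<Longrightarrow> l \<in> S \<Longrightarrow>
                 cpd (\<lambda>s. Omega \<omega> \<theta> h j s k l) i t + mmul S (Omega \<omega> \<theta> h i t) (Omega \<omega> \<theta> h j t) k l
               = cpd (\<lambda>s. Omega \<omega> \<theta> h i s k l) j t + mmul S (Omega \<omega> \<theta> h j t) (Omega \<omega> \<theta> h i t) k l"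
  shows "\<theta> a t m (unitv b) = \<theta> b t m (unitv a)"
proof -
  have column_one: "Omega \<omega> \<theta> h b s n mi0 = (if n = unitv b then 1 else 0) / h"
    if "s \<in> U" "n \<in> S" for h b s n
    using std[of s mi0 b n] that S by (simp add: incr_mi0 Omega_def)
  have cpd_zero: "cpd (\<lambda>s. Omega \<omega> \<theta> h b s m mi0) a t = 0" for h a b
    using assms(1-3) column_one by (intro cpd_locally_const) auto
  have mmul_column_one:
    "mmul S (Omega \<omega> \<theta> h a t) (Omega \<omega> \<theta> h b t) m mi0 = Omega \<omega> \<theta> h a t m (unitv b) / h" for h a b
  proof -
    have "mmul S (Omega \<omega> \<theta> h a t) (Omega \<omega> \<theta> h b t) m mi0
        = (\<Sum>n\<in>S. if n = unitv b then Omega \<omega> \<theta> h a t m n / h else 0)"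
      unfolding mmul_def using column_one[OF \<open>t \<in> U\<close>] by (intro sum.cong) auto
    then show ?thesis
      using S by (simp add: sum.delta')
  qed
  have "Omega \<omega> \<theta> h a t m (unitv b) = Omega \<omega> \<theta> h b t m (unitv a)" if "h \<noteq> 0" for h
    using flat[OF that \<open>t \<in> U\<close> \<open>m \<in> S\<close> \<open>mi0 \<in> S\<close>, of a b] that
    by (simp add: cpd_zero mmul_column_one)
  then show ?thesis
    unfolding Omega_def
    by (rule affine_in_inverse_const_eq)
qed

text \<open>The potential of the Poincare lemma on a set star-shaped about \<open>p\<close>.\<close>
definition radial_potential ::
  "complex^'i::finite \<Rightarrow> ('i \<Rightarrow> complex^'i \<Rightarrow> complex) \<Rightarrow> complex^'i \<Rightarrow> complex" where
  "radial_potential p f x = integral {0..1} (\<lambda>s. \<Sum>j\<in>UNIV. f j (p + s *\<^sub>R (x - p)) * (x - p)$j)"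

lemma scaleR_vec_nth_complex: "(s *\<^sub>R (v::complex^'i::finite)) $ l = complex_of_real s * v $ l"
  by (subst vector_scaleR_component) (simp add: scaleR_conv_of_real)

lemma has_derivative_radial_integrand:
  fixes f :: "'i::finite \<Rightarrow> complex^'i \<Rightarrow> complex" and D :: "'i \<Rightarrow> 'i \<Rightarrow> complex"
  assumes "\<And>j. (f j has_derivative (\<lambda>v. \<Sum>l\<in>UNIV. D l j * v$l)) (at (p + s *\<^sub>R (x - p)))"
  shows "((\<lambda>x. \<Sum>j\<in>UNIV. f j (p + s *\<^sub>R (x - p)) * (x - p)$j) has_derivative
           (\<lambda>v. \<Sum>k\<in>UNIV. (of_real s * (\<Sum>j\<in>UNIV. D k j * (x - p)$j) + f k (p + s *\<^sub>R (x - p))) * v$k))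
         (at x)"
proof -
  let ?y = "p + s *\<^sub>R (x - p)"
  have radial: "((\<lambda>x. p + s *\<^sub>R (x - p)) has_derivative (\<lambda>v. s *\<^sub>R v)) (at x)"
    by (auto intro!: derivative_eq_intros)
  have "((\<lambda>x. f j (p + s *\<^sub>R (x - p))) has_derivative
      (\<lambda>v. \<Sum>l\<in>UNIV. D l j * (s *\<^sub>R v)$l)) (at x)" for j
    using diff_chain_at[OF radial assms[of j]] by (simp add: comp_def)
  moreover have "((\<lambda>x. (x - p) $ j) has_derivative (\<lambda>v. v $ j)) (at x)" for j
    by (auto intro!: derivative_eq_intros bounded_linear.has_derivative[OF bounded_linear_vec_nth])
  ultimately have "((\<lambda>x. \<Sum>j\<in>UNIV. f j (p + s *\<^sub>R (x - p)) * (x - p)$j) has_derivative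
      (\<lambda>v. \<Sum>j\<in>UNIV. f j ?y * v$j + (\<Sum>l\<in>UNIV. D l j * (s *\<^sub>R v)$l) * (x - p)$j)) (at x)"
    by (intro has_derivative_sum has_derivative_mult)
  moreover have "(\<Sum>j\<in>UNIV. f j ?y * v$j + (\<Sum>l\<in>UNIV. D l j * (s *\<^sub>R v)$l) * (x - p)$j)
      = (\<Sum>k\<in>UNIV. (of_real s * (\<Sum>j\<in>UNIV. D k j * (x - p)$j) + f k ?y) * v$k)" for v
  proof -
    have "(\<Sum>j\<in>UNIV. (\<Sum>l\<in>UNIV. D l j * (s *\<^sub>R v)$l) * (x - p)$j)
        = (\<Sum>j\<in>UNIV. \<Sum>k\<in>UNIV. of_real s * D k j * (x - p)$j * v$k)"
      unfolding scaleR_vec_nth_complex by (simp add: sum_distrib_left sum_distrib_right mult_ac)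
    also have "\<dots> = (\<Sum>k\<in>UNIV. of_real s * (\<Sum>j\<in>UNIV. D k j * (x - p)$j) * v$k)"
      by (subst sum.swap) (simp add: sum_distrib_left sum_distrib_right mult_ac)
    finally show ?thesis
      by (simp add: sum.distrib distrib_right add_ac)
  qed
  ultimately show ?thesis
    by simp
qed

text \<open>The integrand is the derivative of \<open>s \<mapsto> s f(p + s(x - p))\<close>.\<close>
lemma has_integral_radial_derivative:
  fixes f :: "complex^'i::finite \<Rightarrow> complex" and D :: "real \<Rightarrow> 'i \<Rightarrow> complex"
  assumes "\<And>s. s \<in> {0..1} \<Longrightarrow> (f has_derivative (\<lambda>v. \<Sum>l\<in>UNIV. D s l * v$l)) (at (p + s *\<^sub>R (x - p)))"
  shows "((\<lambda>s. of_real s * (\<Sum>l\<in>UNIV. D s l * (x - p)$l) + f (p + s *\<^sub>R (x - p))) has_integral f x) {0..1}"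
proof -
  have "((\<lambda>s. s *\<^sub>R f (p + s *\<^sub>R (x - p))) has_vector_derivative
         of_real s * (\<Sum>l\<in>UNIV. D s l * (x - p)$l) + f (p + s *\<^sub>R (x - p))) (at s within {0..1})"
    if "s \<in> {0..1}" for s
  proof -
    have radial: "((\<lambda>s. p + s *\<^sub>R (x - p)) has_derivative (\<lambda>h. h *\<^sub>R (x - p))) (at s)"
      by (auto intro!: derivative_eq_intros)
    have "((\<lambda>s. f (p + s *\<^sub>R (x - p))) has_derivative
        (\<lambda>h. \<Sum>l\<in>UNIV. D s l * (h *\<^sub>R (x - p))$l)) (at s)"
      using diff_chain_at[OF radial assms[OF that]] by (simp add: comp_def)
    from has_derivative_scaleR[OF has_derivative_ident this]
    have "((\<lambda>s. s *\<^sub>R f (p + s *\<^sub>R (x - p))) has_derivative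
        (\<lambda>h. s *\<^sub>R (\<Sum>l\<in>UNIV. D s l * (h *\<^sub>R (x - p))$l) + h *\<^sub>R f (p + s *\<^sub>R (x - p)))) (at s)"
      by simp
    moreover have "s *\<^sub>R (\<Sum>l\<in>UNIV. D s l * (h *\<^sub>R (x - p))$l) + h *\<^sub>R f (p + s *\<^sub>R (x - p))
        = h *\<^sub>R (of_real s * (\<Sum>l\<in>UNIV. D s l * (x - p)$l) + f (p + s *\<^sub>R (x - p)))" for h
      unfolding scaleR_vec_nth_complex by (simp add: scaleR_conv_of_real sum_distrib_left distrib_left mult_ac)
    ultimately show ?thesis
      by (auto simp: has_vector_derivative_def intro: has_derivative_at_withinI)
  qed
  from fundamental_theorem_of_calculus[OF _ this] show ?thesis
    by simp
qed

lemma radial_potential_has_derivative: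
  fixes f :: "'i::finite \<Rightarrow> complex^'i \<Rightarrow> complex" and D :: "'i \<Rightarrow> 'i \<Rightarrow> complex^'i \<Rightarrow> complex"
  assumes S: "open S" "convex S" "p \<in> S" "x \<in> S"
    and der: "\<And>j y. y \<in> S \<Longrightarrow> (f j has_derivative (\<lambda>v. \<Sum>l\<in>UNIV. D l j y * v$l)) (at y)"
    and cont: "\<And>l j. continuous_on S (D l j)"
    and sym: "\<And>l j y. y \<in> S \<Longrightarrow> D l j y = D j l y"
  shows "(radial_potential p f has_derivative (\<lambda>v. \<Sum>k\<in>UNIV. f k x * v$k)) (at x)"
proof -
  have radial_in: "p + s *\<^sub>R (y - p) \<in> S" if "y \<in> S" "s \<in> cbox 0 1" for y s
  proof -
    have "p + s *\<^sub>R (y - p) = (1 - s) *\<^sub>R p + s *\<^sub>R y"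
      by (simp add: algebra_simps)
    then show ?thesis
      using convexD[OF S(2,3) that(1), of "1 - s" s] that(2) by simp
  qed
  have radial_cont: "continuous_on (S \<times> cbox 0 1) (\<lambda>z. h (p + snd z *\<^sub>R (fst z - p)))"
    if "continuous_on S h" for h :: "complex^'i \<Rightarrow> complex"
    by (rule continuous_on_compose2[OF that]) (auto intro!: continuous_intros radial_in)
  have f_cont: "continuous_on S (f j)" for j
    using der by (meson continuous_at_imp_continuous_on has_derivative_continuous)
  define A where "A k y s = of_real s * (\<Sum>j\<in>UNIV. D k j (p + s *\<^sub>R (y - p)) * (y - p)$j)
    + f k (p + s *\<^sub>R (y - p))" for k y s
  define fx where "fx y s = (\<Sum>k\<in>UNIV. blinfun_mult_right (A k y s) o\<^sub>L Blinfun (\<lambda>v. v$k))" for y s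
  have fx_apply: "blinfun_apply (fx y s) = (\<lambda>v. \<Sum>k\<in>UNIV. A k y s * v$k)" for y s
    by (simp add: fun_eq_iff fx_def blinfun.sum_left bounded_linear_Blinfun_apply bounded_linear_vec_nth)
  have fx_cont: "continuous_on (S \<times> cbox 0 1) (\<lambda>(y, s). fx y s)"
    unfolding fx_def A_def split_beta by (intro continuous_intros radial_cont cont f_cont)
  have "((\<lambda>y. integral (cbox 0 1) (\<lambda>s. \<Sum>j\<in>UNIV. f j (p + s *\<^sub>R (y - p)) * (y - p)$j))
      has_derivative integral (cbox 0 1) (fx x)) (at x within S)"
  proof (rule leibniz_rule[OF _ _ fx_cont S(4,2)])
    fix y s assume "y \<in> S" "s \<in> cbox (0::real) 1"
    then have "p + s *\<^sub>R (y - p) \<in> S"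
      by (rule radial_in)
    from has_derivative_radial_integrand[of f "\<lambda>l j. D l j (p + s *\<^sub>R (y - p))", OF der[OF this]]
    show "((\<lambda>y. \<Sum>j\<in>UNIV. f j (p + s *\<^sub>R (y - p)) * (y - p)$j) has_derivative fx y s) (at y within S)"
      unfolding fx_apply A_def by (rule has_derivative_at_withinI)
  next
    fix y assume "y \<in> S"
    then show "(\<lambda>s. \<Sum>j\<in>UNIV. f j (p + s *\<^sub>R (y - p)) * (y - p)$j) integrable_on cbox 0 1"
      by (intro integrable_continuous continuous_intros continuous_on_compose2[OF f_cont])
        (auto intro: radial_in)
  qed
  then have potential_der: "(radial_potential p f has_derivative integral (cbox 0 1) (fx x)) (at x)"
    using at_within_open[OF S(4,1)] unfolding radial_potential_def[abs_def] by simp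
  have "blinfun_apply (integral (cbox 0 1) (fx x)) v = (\<Sum>k\<in>UNIV. f k x * v$k)" for v
  proof -
    have "continuous_on (cbox 0 1) (\<lambda>s. (\<lambda>(y, s). fx y s) (x, s))"
      using S(4) by (intro continuous_on_compose2[OF fx_cont] continuous_intros) auto
    then have "fx x integrable_on cbox 0 1"
      by (simp add: integrable_continuous_interval)
    then have "blinfun_apply (integral (cbox 0 1) (fx x)) v
        = integral (cbox 0 1) (\<lambda>s. \<Sum>k\<in>UNIV. A k x s * v$k)"
      by (simp add: blinfun_apply_integral fx_apply)
    also have "\<dots> = (\<Sum>k\<in>UNIV. f k x * v$k)"
    proof (intro integral_unique has_integral_sum has_integral_mult_left finite)
      fix k
      have "of_real s * (\<Sum>l\<in>UNIV. D l k (p + s *\<^sub>R (x - p)) * (x - p)$l)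
          + f k (p + s *\<^sub>R (x - p)) = A k x s" if "s \<in> {0..1}" for s
      proof -
        have "D l k (p + s *\<^sub>R (x - p)) = D k l (p + s *\<^sub>R (x - p))" for l
          using that by (intro sym radial_in[OF S(4)]) simp
        then show ?thesis
          unfolding A_def by simp
      qed
      moreover have "((\<lambda>s. of_real s * (\<Sum>l\<in>UNIV. D l k (p + s *\<^sub>R (x - p)) * (x - p)$l)
          + f k (p + s *\<^sub>R (x - p))) has_integral f k x) {0..1}"
        using S(4) by (intro has_integral_radial_derivative der radial_in) auto
      ultimately show "(A k x has_integral f k x) (cbox 0 1)"
        unfolding cbox_interval by (rule has_integral_eq)
    qed
    finally show ?thesis .
  qed
  then show ?thesis
    by (intro has_derivative_eq_rhs[OF potential_der]) (simp add: fun_eq_iff)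
qed

lemma local_jacobian_potential:
  fixes T :: "complex^'i::finite \<Rightarrow> 'i \<Rightarrow> 'i \<Rightarrow> complex"
    and D :: "'i \<Rightarrow> 'i \<Rightarrow> 'i \<Rightarrow> complex^'i \<Rightarrow> complex"
  assumes "open U" "p \<in> U"
    and der: "\<And>i j t. t \<in> U \<Longrightarrow> ((\<lambda>t. T t i j) has_derivative (\<lambda>v. \<Sum>l\<in>UNIV. D i l j t * v$l)) (at t)"
    and cont: "\<And>i l j. continuous_on U (D i l j)"
    and sym: "\<And>i l j t. t \<in> U \<Longrightarrow> D i l j t = D i j l t"
  shows "\<exists>V. open V \<and> p \<in> V \<and> V \<subseteq> U \<and>
           (\<exists>\<phi> :: complex^'i \<Rightarrow> complex^'i.
              (\<forall>i. cholo_on V (\<lambda>s. \<phi> s $ i)) \<and>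
              (\<forall>t\<in>V. \<forall>i j. has_cpartial (\<lambda>s. \<phi> s $ i) j t (T t i j)))"
proof -
  obtain r where r: "r > 0" "ball p r \<subseteq> U"
    using assms(1,2) open_contains_ball by blast
  define \<phi> where "\<phi> s = (\<chi> i. radial_potential p (\<lambda>j t. T t i j) s)" for s
  have \<phi>_der: "((\<lambda>s. \<phi> s $ i) has_derivative (\<lambda>v. \<Sum>j\<in>UNIV. T t i j * v$j)) (at t)"
    if "t \<in> ball p r" for i t
    unfolding \<phi>_def vec_lambda_beta
    using r that der sym
    by (intro radial_potential_has_derivative[of "ball p r" p t "\<lambda>j t. T t i j" "D i"]
        continuous_on_subset[OF cont]) auto
  show ?thesis
  proof (intro exI conjI allI ballI)
    show "open (ball p r)" "p \<in> ball p r" "ball p r \<subseteq> U"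
      using r by auto
    show "cholo_on (ball p r) (\<lambda>s. \<phi> s $ i)" for i
      unfolding cholo_on_def
    proof
      fix t assume "t \<in> ball p r"
      with \<phi>_der show "\<exists>c::complex^'i. ((\<lambda>s. \<phi> s $ i) has_derivative (\<lambda>v. \<Sum>j\<in>UNIV. c$j * v$j)) (at t)"
        by (intro exI[of _ "\<chi> j. T t i j"]) simp
    qed
    show "has_cpartial (\<lambda>s. \<phi> s $ i) j t (T t i j)" if "t \<in> ball p r" for t i j
      using \<phi>_der[OF that] by (rule has_cpartial_if_has_derivative)
  qed
qed

theorem proposition5p2:
  fixes U :: "(complex^'i::finite) set"
    and t0 :: "complex^'i"
    and S :: "'i mi set"
    and \<omega> \<theta> :: "'i \<Rightarrow> complex^'i \<Rightarrow> 'i mi \<Rightarrow> 'i mi \<Rightarrow> complex"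
    and Q0 :: "complex^'i \<Rightarrow> 'i mi \<Rightarrow> 'i mi \<Rightarrow> complex"
    and T :: "complex^'i \<Rightarrow> 'i \<Rightarrow> 'i \<Rightarrow> complex"
  assumes U: "open U" "connected U" "t0 \<in> U"
    and S_fin: "finite S"
    and S_ideal: "order_ideal S"
    and S_1: "mi0 \<in> S"
    and S_hd: "\<And>i. unitv i \<in> S"
    and holo_\<omega>: "\<And>i k l. k \<in> S \<Longrightarrow> l \<in> S \<Longrightarrow> cholo_on U (\<lambda>t. \<omega> i t k l)"
    and holo_\<theta>: "\<And>i k l. k \<in> S \<Longrightarrow> l \<in> S \<Longrightarrow> cholo_on U (\<lambda>t. \<theta> i t k l)"
    and std: "\<And>i \<alpha> t k. t \<in> U \<Longrightarrow> \<alpha> \<in> S \<Longrightarrow> incr \<alpha> i \<in> S \<Longrightarrow> k \<in> S \<Longrightarrow>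
                 \<omega> i t k \<alpha> = (if k = incr \<alpha> i then 1 else 0) \<and> \<theta> i t k \<alpha> = 0"
    and flat: "\<And>h i j t k l. h \<noteq> 0 \<Longrightarrow> t \<in> U \<Longrightarrow> k \<in> S \<Longrightarrow> l \<in> S \<Longrightarrow>
                 cpd (\<lambda>s. Omega \<omega> \<theta> h j s k l) i t + mmul S (Omega \<omega> \<theta> h i t) (Omega \<omega> \<theta> h j t) k l
               = cpd (\<lambda>s. Omega \<omega> \<theta> h i s k l) j t + mmul S (Omega \<omega> \<theta> h j t) (Omega \<omega> \<theta> h i t) k l"
    and groebner0: "\<And>i j t. t \<in> U \<Longrightarrow> incr (unitv j) i \<notin> S \<Longrightarrow> \<theta> i t mi0 (unitv j) = 0"
    and holo_Q0: "\<And>k l. k \<in> S \<Longrightarrow> l \<in> S \<Longrightarrow> cholo_on U (\<lambda>t. Q0 t k l)"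
    and Q0_ode: "\<And>i t k l. t \<in> U \<Longrightarrow> k \<in> S \<Longrightarrow> l \<in> S \<Longrightarrow>
                 has_cpartial (\<lambda>s. Q0 s k l) i t (mmul S (Q0 t) (\<theta> i t) k l)"
    and Q0_init: "\<And>k l. k \<in> S \<Longrightarrow> l \<in> S \<Longrightarrow> Q0 t0 k l = (if k = l then 1 else 0)"
    and T_def: "\<And>t i j. T t i j = Q0 t (unitv i) (unitv j)"
  shows "\<forall>p\<in>U. \<exists>V. open V \<and> p \<in> V \<and> V \<subseteq> U \<and>
           (\<exists>that :: complex^'i \<Rightarrow> complex^'i.
              (\<forall>i. cholo_on V (\<lambda>s. that s $ i)) \<and>
              (\<forall>t\<in>V. \<forall>i j. has_cpartial (\<lambda>s. that s $ i) j t (T t i j)))"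
proof (intro ballI local_jacobian_potential[OF U(1),
      where D = "\<lambda>i l j t. mmul S (Q0 t) (\<theta> l t) (unitv i) (unitv j)"])
  show "p \<in> U" if "p \<in> U" for p
    using that .
  show "((\<lambda>t. T t i j) has_derivative (\<lambda>v. \<Sum>l\<in>UNIV. mmul S (Q0 t) (\<theta> l t) (unitv i) (unitv j) * v$l))
      (at t)" if "t \<in> U" for i j t
    unfolding T_def
    using cholo_on_has_derivative_partials[OF holo_Q0[OF S_hd S_hd] that Q0_ode[OF that S_hd S_hd]] .
  show "continuous_on U (\<lambda>t. mmul S (Q0 t) (\<theta> l t) (unitv i) (unitv j))" for i l j
    unfolding mmul_def by (intro continuous_intros cholo_on_imp_continuous_on holo_Q0 holo_\<theta> S_hd)
  show "mmul S (Q0 t) (\<theta> l t) (unitv i) (unitv j) = mmul S (Q0 t) (\<theta> j t) (unitv i) (unitv l)"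
    if "t \<in> U" for i l j t
    unfolding mmul_def
    by (intro sum.cong refl arg_cong[where f = "(*) _"] theta_unitv_sym[OF U(1) that _ S_fin S_1 S_hd std flat])
qed

end
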